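(* Let $N=\{1,\ldots,n\}$. $\mathscr{BG}_+(n)$, viewed as a subset of $\mathbb{R}^{2^N\setminus\{\varnothing,N\}}$, is a $(2^n-2)$-dimensional polytope.
   Context: A game on $N$ is a map $v:2^N\to\mathbb{R}$ with $v(\varnothing)=0$. $\mathscr{G}_+(n)$ is the set of games with $v(S)\geqslant 0$ for all $S$ and $v(N)=1$. A collection $\mathscr{B}$ of nonempty subsets of $N$ is balanced if there exist positive weights $(\lambda_S)_{S\in\mathscr{B}}$ with $\sum_{S\in\mathscr{B},S\ni i}\lambda_S=1$ for all $i\in N$; minimal balanced if no proper subcollection is balanced, with unique weights $\lambda^{\mathscr{B}}_S$. $\mathfrak{B}^*(n)$ is the set of minimal balanced collections on $N$ other than $\{N\}$. $\mathscr{BG}_+(n)=\{v\in\mathscr{G}_+(n):\sum_{S\in\mathscr{B}}\lambda^{\mathscr{B}}_Sv(S)\leqslant 1\ \forall\mathscr{B}\in\mathfrak{B}^*(n)\}$, i.e. the nonnegative games with $v(N)=1$ having nonempty core. *)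

theory Defs
  imports "HOL-Analysis.Analysis"
begin

text \<open>Player set N is the finite type 'n (N = UNIV). A game is a vector
  v :: real ^ ('n set) indexed by all coalitions, with v $ {} = 0.\<close>

definition balancing_weights :: "'n::finite set set \<Rightarrow> ('n set \<Rightarrow> real) \<Rightarrow> bool" where
  "balancing_weights B lam \<longleftrightarrow>
     (\<forall>S\<in>B. lam S > 0) \<and> (\<forall>i. (\<Sum>S\<in>{S\<in>B. i \<in> S}. lam S) = 1)"

definition balanced :: "'n::finite set set \<Rightarrow> bool" where
  "balanced B \<longleftrightarrow> {} \<notin> B \<and> (\<exists>lam. balancing_weights B lam)"

definition min_balanced :: "'n::finite set set \<Rightarrow> bool" where
  "min_balanced B \<longleftrightarrow> balanced B \<and> (\<forall>B'. B' \<subset> B \<longrightarrow> \<not> balanced B')"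

text \<open>The (unique) weights of a minimal balanced collection, extended by 0 outside B.\<close>
definition mb_weight :: "'n::finite set set \<Rightarrow> 'n set \<Rightarrow> real" where
  "mb_weight B = (THE lam. balancing_weights B lam \<and> (\<forall>S. S \<notin> B \<longrightarrow> lam S = 0))"

definition Bstar :: "'n::finite set set set" where
  "Bstar = {B. min_balanced B \<and> B \<noteq> {UNIV}}"

definition game :: "real ^ ('n::finite set) \<Rightarrow> bool" where
  "game v \<longleftrightarrow> v $ {} = 0"

definition Gplus :: "(real ^ ('n::finite set)) set" where
  "Gplus = {v. game v \<and> (\<forall>S. v $ S \<ge> 0) \<and> v $ UNIV = 1}"

definition BGplus :: "(real ^ ('n::finite set)) set" where
  "BGplus = {v \<in> Gplus. \<forall>B\<in>Bstar. (\<Sum>S\<in>B. mb_weight B S * v $ S) \<le> 1}"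

text \<open>Coordinate projection of R^(2^N) onto the coordinate subspace
  R^(2^N \ {{},N}) (coordinates {} and N set to 0).\<close>
definition proj_coal :: "real ^ ('n::finite set) \<Rightarrow> real ^ ('n set)" where
  "proj_coal v = (\<chi> S. if S = {} \<or> S = UNIV then 0 else v $ S)"

end

theory Submission
  imports Defs
begin

text \<open>After dropping the coordinates of the empty and the grand coalition, the set becomes
  the polyhedron of nonnegative vectors satisfying the finitely many balancedness
  inequalities. Every bipartition {S, N - S} is minimal balanced with weights 1, so
  x(S) + x(N - S) \<le> 1 and the polyhedron is bounded. On the other hand, it contains 0 and a
  positive multiple of every unit vector of a proper coalition, so it spans the whole
  coordinate subspace of dimension 2^n - 2.\<close>

lemma partition_on_block_eq:
  assumes "partition_on A B" "S \<in> B" "T \<in> B" "i \<in> S" "i \<in> T"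
  shows "S = T"
  using assms partition_onD2[OF assms(1)] by (auto dest: disjointD)

lemma partition_on_blocks_containing:
  assumes "partition_on A B" "S \<in> B" "i \<in> S"
  shows "{T \<in> B. i \<in> T} = {S}"
  using assms partition_on_block_eq[OF assms(1)] by blast

lemma balancing_weights_partition_on:
  assumes "partition_on UNIV B"
  shows "balancing_weights B lam \<longleftrightarrow> (\<forall>S\<in>B. lam S = 1)"
proof
  assume bw: "balancing_weights B lam"
  show "\<forall>S\<in>B. lam S = 1"
  proof
    fix S assume "S \<in> B"
    moreover obtain i where "i \<in> S"
      using \<open>S \<in> B\<close> partition_onD3[OF assms] by fastforce
    ultimately have "{T \<in> B. i \<in> T} = {S}"
      by (rule partition_on_blocks_containing[OF assms])
    moreover have "(\<Sum>T\<in>{T \<in> B. i \<in> T}. lam T) = 1"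
      using bw by (simp add: balancing_weights_def)
    ultimately show "lam S = 1" by simp
  qed
next
  assume one: "\<forall>S\<in>B. lam S = 1"
  have sum_one: "(\<Sum>T\<in>{T \<in> B. i \<in> T}. lam T) = 1" for i
  proof -
    obtain S where "S \<in> B" "i \<in> S"
      using partition_onD1[OF assms] by blast
    then show ?thesis
      using one partition_on_blocks_containing[OF assms] by simp
  qed
  with one show "balancing_weights B lam"
    unfolding balancing_weights_def by simp
qed

lemma min_balanced_partition_on:
  assumes "partition_on UNIV B"
  shows "min_balanced B"
  unfolding min_balanced_def
proof (intro conjI allI impI)
  have "balancing_weights B (\<lambda>_. 1)"
    by (simp add: balancing_weights_partition_on[OF assms])
  then show "balanced B"
    unfolding balanced_def using partition_onD3[OF assms] by blast
next
  fix B' assume "B' \<subset> B"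
  then obtain S where S: "S \<in> B" "S \<notin> B'" by blast
  moreover obtain i where "i \<in> S"
    using S(1) partition_onD3[OF assms] by fastforce
  ultimately have no_block: "{T \<in> B'. i \<in> T} = {}"
    using \<open>B' \<subset> B\<close> partition_on_block_eq[OF assms] by blast
  have "(\<Sum>T\<in>{T \<in> B'. i \<in> T}. lam T) \<noteq> 1" for lam :: "'a set \<Rightarrow> real"
    by (simp only: no_block) simp
  then show "\<not> balanced B'"
    unfolding balanced_def balancing_weights_def by blast
qed

lemma mb_weight_partition_on:
  assumes "partition_on UNIV B"
  shows "mb_weight B = (\<lambda>S. if S \<in> B then 1 else 0)"
  unfolding mb_weight_def
proof (rule the_equality)
  show "balancing_weights B (\<lambda>S. if S \<in> B then 1 else 0) \<and>
      (\<forall>S. S \<notin> B \<longrightarrow> (if S \<in> B then 1 else 0) = (0::real))"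
    by (simp add: balancing_weights_partition_on[OF assms])
next
  fix lam :: "'a set \<Rightarrow> real"
  assume "balancing_weights B lam \<and> (\<forall>S. S \<notin> B \<longrightarrow> lam S = 0)"
  then show "lam = (\<lambda>S. if S \<in> B then 1 else 0)"
    by (simp add: fun_eq_iff balancing_weights_partition_on[OF assms])
qed

lemma partition_on_complement_pair:
  fixes S :: "'a set"
  assumes "S \<noteq> {}" "S \<noteq> UNIV"
  shows "partition_on UNIV {S, -S}"
proof (rule partition_onI)
  show "\<Union>{S, - S} = UNIV" by auto
  show "disjnt p q" if "p \<in> {S, - S}" "q \<in> {S, - S}" "p \<noteq> q" for p q
    using that by (auto simp: disjnt_def)
  show "{} \<notin> {S, - S}" using assms by auto
qed

lemma complement_pair_in_Bstar:
  fixes S :: "'n::finite set"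
  assumes "S \<noteq> {}" "S \<noteq> UNIV"
  shows "{S, -S} \<in> Bstar"
proof -
  have "{S, -S} \<noteq> {UNIV}"
    using assms by (auto simp: doubleton_eq_iff)
  then show ?thesis
    using min_balanced_partition_on[OF partition_on_complement_pair[OF assms]]
    by (simp add: Bstar_def)
qed

lemma Bstar_members_proper:
  assumes "B \<in> (Bstar :: 'n::finite set set set)"
  shows "{} \<notin> B" "UNIV \<notin> B"
proof -
  show "{} \<notin> B"
    using assms by (auto simp: Bstar_def min_balanced_def balanced_def)
  have "balanced {UNIV :: 'n set}"
    using min_balanced_partition_on[OF partition_on_space] unfolding min_balanced_def by blast
  then show "UNIV \<notin> B"
    using assms unfolding Bstar_def min_balanced_def by blast
qed

definition BGplus_proper :: "(real ^ ('n::finite set)) set" where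
  "BGplus_proper = {x. x $ {} = 0 \<and> x $ UNIV = 0 \<and> (\<forall>S. 0 \<le> x $ S) \<and>
     (\<forall>B\<in>Bstar. (\<Sum>S\<in>B. mb_weight B S * x $ S) \<le> 1)}"

lemma Bstar_sum_cong:
  assumes "B \<in> (Bstar :: 'n::finite set set set)"
    and "\<And>S. S \<noteq> {} \<Longrightarrow> S \<noteq> UNIV \<Longrightarrow> x $ S = y $ S"
  shows "(\<Sum>S\<in>B. mb_weight B S * x $ S) = (\<Sum>S\<in>B. mb_weight B S * y $ S)"
proof (rule sum.cong)
  fix S assume "S \<in> B"
  then have "S \<noteq> {}" "S \<noteq> UNIV"
    using Bstar_members_proper[OF assms(1)] by auto
  then show "mb_weight B S * x $ S = mb_weight B S * y $ S"
    using assms(2) by simp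
qed simp

lemma proj_coal_BGplus: "proj_coal ` (BGplus :: (real ^ ('n::finite set)) set) = BGplus_proper"
  (is "?image = _")
proof
  show "?image \<subseteq> BGplus_proper"
  proof
    fix x assume "x \<in> ?image"
    then obtain v where v: "v \<in> BGplus" and x: "x = proj_coal v" by blast
    have "(\<Sum>S\<in>B. mb_weight B S * x $ S) = (\<Sum>S\<in>B. mb_weight B S * v $ S)" if "B \<in> Bstar" for B
      using that by (rule Bstar_sum_cong) (simp add: x proj_coal_def)
    with v show "x \<in> BGplus_proper"
      by (auto simp: BGplus_proper_def BGplus_def Gplus_def x proj_coal_def)
  qed
next
  show "BGplus_proper \<subseteq> ?image"
  proof
    fix x :: "real ^ ('n set)" assume x: "x \<in> BGplus_proper"
    define v :: "real ^ ('n set)" where "v = (\<chi> S. if S = UNIV then 1 else x $ S)"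
    have sums: "(\<Sum>S\<in>B. mb_weight B S * v $ S) = (\<Sum>S\<in>B. mb_weight B S * x $ S)"
      if "B \<in> Bstar" for B
      using that by (rule Bstar_sum_cong) (simp add: v_def)
    have "v \<in> BGplus"
      using x sums by (auto simp: BGplus_def Gplus_def game_def v_def BGplus_proper_def)
    moreover have "x = proj_coal v"
      using x by (auto simp: vec_eq_iff proj_coal_def v_def BGplus_proper_def)
    ultimately show "x \<in> ?image" by blast
  qed
qed

lemma BGplus_proper_le_one:
  assumes "x \<in> BGplus_proper"
  shows "x $ S \<le> 1"
proof (cases "S = {} \<or> S = UNIV")
  case True
  then show ?thesis using assms by (auto simp: BGplus_proper_def)
next
  case False
  then have S: "S \<noteq> {}" "S \<noteq> UNIV" by auto
  have "S \<noteq> -S" by auto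
  then have "(\<Sum>T\<in>{S, -S}. mb_weight {S, -S} T * x $ T) = x $ S + x $ (-S)"
    by (simp add: mb_weight_partition_on[OF partition_on_complement_pair[OF S]])
  moreover have "(\<Sum>T\<in>{S, -S}. mb_weight {S, -S} T * x $ T) \<le> 1"
    using assms complement_pair_in_Bstar[OF S] unfolding BGplus_proper_def by blast
  moreover have "0 \<le> x $ (-S)"
    using assms by (simp add: BGplus_proper_def)
  ultimately show ?thesis by linarith
qed

lemma bounded_BGplus_proper: "bounded BGplus_proper"
proof (rule bounded_subset[OF bounded_cbox])
  show "BGplus_proper \<subseteq> cbox 0 (\<chi> S. 1)"
  proof
    fix x assume x: "x \<in> BGplus_proper"
    then show "x \<in> cbox 0 (\<chi> S. 1)"
      using BGplus_proper_le_one[OF x] by (simp add: mem_box_cart BGplus_proper_def)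
  qed
qed

lemma polyhedron_BGplus_proper: "polyhedron (BGplus_proper :: (real ^ ('n::finite set)) set)"
proof -
  define a :: "'n::finite set set \<Rightarrow> real ^ ('n set)"
    where "a B = (\<chi> S. if S \<in> B then mb_weight B S else 0)" for B
  have a_inner: "a B \<bullet> x = (\<Sum>S\<in>B. mb_weight B S * x $ S)" for B x
  proof -
    have "a B \<bullet> x = (\<Sum>S\<in>UNIV. if S \<in> B then mb_weight B S * x $ S else 0)"
      unfolding a_def inner_vec_def by (intro sum.cong) auto
    then show ?thesis by (simp add: sum.If_cases)
  qed
  have "BGplus_proper = {x. axis {} 1 \<bullet> x = 0} \<inter> {x. axis UNIV 1 \<bullet> x = 0} \<inter>
      \<Inter> (range (\<lambda>S. {x. axis S 1 \<bullet> x \<ge> 0})) \<inter> \<Inter> ((\<lambda>B. {x. a B \<bullet> x \<le> 1}) ` Bstar)"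
    by (auto simp: BGplus_proper_def a_inner inner_axis')
  moreover have "polyhedron \<dots>"
    by (intro polyhedron_Int polyhedron_Inter)
      (auto simp: polyhedron_hyperplane polyhedron_halfspace_le polyhedron_halfspace_ge)
  ultimately show ?thesis by simp
qed

lemma scaled_axis_in_BGplus_proper:
  fixes T :: "'n::finite set"
  assumes "T \<noteq> {}" "T \<noteq> UNIV"
  shows "\<exists>c>0. c *\<^sub>R axis T 1 \<in> BGplus_proper"
proof -
  \<comment> \<open>Absolute values, since nothing is known about the sign of a THE-defined weight.\<close>
  define c where "c = 1 / (1 + (\<Sum>B\<in>(Bstar :: 'n set set set). \<bar>mb_weight B T\<bar>))"
  have c_pos: "0 < c"
    unfolding c_def by (simp add: add_pos_nonneg sum_nonneg)
  have "c * mb_weight B T \<le> 1" if "B \<in> Bstar" for B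
  proof -
    have "mb_weight B T \<le> 1 + (\<Sum>B\<in>(Bstar :: 'n set set set). \<bar>mb_weight B T\<bar>)"
      using that member_le_sum[of B Bstar "\<lambda>B. \<bar>mb_weight B T\<bar>"] by simp
    then show ?thesis
      using c_pos by (simp add: c_def field_simps)
  qed
  moreover have "(\<Sum>S\<in>B. mb_weight B S * (c *\<^sub>R axis T 1) $ S) =
      (if T \<in> B then c * mb_weight B T else 0)" for B :: "'n set set"
    by (simp add: axis_def if_distrib sum.delta' cong: if_cong)
  ultimately have "c *\<^sub>R axis T 1 \<in> BGplus_proper"
    using assms c_pos by (auto simp: BGplus_proper_def axis_def)
  with c_pos show ?thesis by blast
qed

lemma aff_dim_eq_card_substandard:
  fixes P :: "'a::euclidean_space set"
  assumes "d \<subseteq> Basis" "0 \<in> P"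
    and "\<And>x i. x \<in> P \<Longrightarrow> i \<in> Basis - d \<Longrightarrow> x \<bullet> i = 0"
    and "\<And>b. b \<in> d \<Longrightarrow> \<exists>c. c \<noteq> 0 \<and> c *\<^sub>R b \<in> P"
  shows "aff_dim P = int (card d)"
proof -
  have "aff_dim P = int (dim P)"
    using assms(2) by (intro aff_dim_zero hull_inc)
  moreover have "dim P \<le> card d"
  proof -
    have "P \<subseteq> {x. \<forall>i\<in>Basis. i \<notin> d \<longrightarrow> x \<bullet> i = 0}"
      using assms(3) by blast
    from dim_subset[OF this] show ?thesis
      by (simp add: dim_substandard[OF assms(1)])
  qed
  moreover have "card d \<le> dim P"
  proof -
    have "d \<subseteq> span P"
    proof
      fix b assume "b \<in> d"
      then obtain c where "c \<noteq> 0" "c *\<^sub>R b \<in> P" using assms(4) by blast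
      then have "inverse c *\<^sub>R (c *\<^sub>R b) \<in> span P"
        by (intro span_scale span_base)
      with \<open>c \<noteq> 0\<close> show "b \<in> span P" by simp
    qed
    then have "dim d \<le> dim P"
      using dim_subset dim_span by metis
    moreover have "independent d"
      using assms(1) independent_Basis independent_mono by blast
    ultimately show ?thesis
      by (simp add: dim_eq_card_independent)
  qed
  ultimately show ?thesis by simp
qed

lemma card_proper_subsets:
  "int (card {S :: 'a::finite set. S \<noteq> {} \<and> S \<noteq> UNIV}) = 2 ^ CARD('a) - 2"
proof -
  have "{S :: 'a set. S \<noteq> {} \<and> S \<noteq> UNIV} = UNIV - {{}, UNIV}" by auto
  moreover have "card {{}, UNIV :: 'a set} = 2" by simp
  moreover have "card {{}, UNIV :: 'a set} \<le> card (UNIV :: 'a set set)"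
    by (rule card_mono) simp_all
  ultimately show ?thesis
    by (simp add: card_Diff_subset of_nat_diff)
qed

lemma aff_dim_BGplus_proper:
  "aff_dim (BGplus_proper :: (real ^ ('n::finite set)) set) = 2 ^ CARD('n) - 2"
proof -
  let ?proper = "{S :: 'n set. S \<noteq> {} \<and> S \<noteq> UNIV}"
  let ?d = "(\<lambda>S. axis S (1::real)) ` ?proper"
  have d_Basis: "?d \<subseteq> Basis"
    by (auto simp: Basis_vec_def)
  have "aff_dim (BGplus_proper :: (real ^ ('n set)) set) = int (card ?d)"
  proof (rule aff_dim_eq_card_substandard[OF d_Basis])
    show "0 \<in> BGplus_proper" by (simp add: BGplus_proper_def)
    show "x \<bullet> i = 0" if "x \<in> BGplus_proper" "i \<in> Basis - ?d" for x i
      using that by (auto simp: Basis_vec_def inner_axis BGplus_proper_def)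
    show "\<exists>c. c \<noteq> 0 \<and> c *\<^sub>R b \<in> BGplus_proper" if "b \<in> ?d" for b
    proof -
      obtain S where "S \<noteq> {}" "S \<noteq> UNIV" and "b = axis S 1"
        using \<open>b \<in> ?d\<close> by blast
      then obtain c where "0 < c" "c *\<^sub>R b \<in> BGplus_proper"
        using scaled_axis_in_BGplus_proper by blast
      then show ?thesis by (intro exI[of _ c] conjI) simp_all
    qed
  qed
  moreover have "card ?d = card ?proper"
    by (rule card_image) (auto simp: inj_on_def axis_eq_axis)
  ultimately show ?thesis
    using card_proper_subsets by simp
qed

theorem proposition1:
  shows "polytope (proj_coal ` (BGplus :: (real ^ ('n::finite set)) set))
    \<and> aff_dim (proj_coal ` (BGplus :: (real ^ ('n::finite set)) set)) = 2 ^ CARD('n) - 2"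
  using bounded_BGplus_proper polyhedron_BGplus_proper aff_dim_BGplus_proper
  by (simp add: proj_coal_BGplus polytope_eq_bounded_polyhedron)

end
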